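(* Let $A:\mathbb{N}\to\mathbb{Z}$ and $B:\mathbb{N}\to\mathbb{Z}_{>0}$ be primitive recursive functions, and let $q_n = A(n)/B(n)$. Suppose there is a primitive recursive function $C:\mathbb{N}\to\mathbb{N}$ (a Cauchy modulus of convergence) such that for every $e\in\mathbb{N}$ and all $i,j\ge C(e)$ we have $|q_i-q_j|<2^{-e}$. Then there exist an integer $I$ and a primitive recursive function $P:\mathbb{Z}^+\to\{-1,0,1\}$ such that $$I+\sum_{i=1}^{\infty}P(i)\,2^{-i}=\lim_{n\to\infty} q_n,$$ i.e. the limit of $(q_n)$ is the value of a Signed Primitive Recursive Computed Number.
   Context: A Signed Primitive Recursive Computed Number (SPRCN) is a pair $(I,P)$ where $I\in\mathbb{Z}$ and $P:\mathbb{Z}^+\to\{-1,0,1\}$ is a primitive recursive function; it represents the rational sequence $\left(I+\sum_{i=1}^n P(i)2^{-i}\right)_n$, whose limit $I+\sum_{i=1}^\infty P(i)2^{-i}$ is called the value (or limit) of the SPRCN. *)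

theory Defs
  imports Complex_Main "HOL-Library.Nat_Bijection"
begin

text \<open>Primitive recursive functions on natural numbers, in the style of Paulson's
  HOL-ex Primrec: functions on argument lists, missing arguments default to 0.\<close>

definition nth0 :: "nat list \<Rightarrow> nat \<Rightarrow> nat" where
  "nth0 l i = (if i < length l then l ! i else 0)"

definition hd0 :: "nat list \<Rightarrow> nat" where
  "hd0 l = nth0 l 0"

fun PREC :: "(nat list \<Rightarrow> nat) \<Rightarrow> (nat list \<Rightarrow> nat) \<Rightarrow> nat list \<Rightarrow> nat" where
  "PREC f g [] = f []"
| "PREC f g (x # l) = rec_nat (f l) (\<lambda>y r. g (r # y # l)) x"

inductive PRIMREC :: "(nat list \<Rightarrow> nat) \<Rightarrow> bool" where
  SC: "PRIMREC (\<lambda>l. Suc (hd0 l))"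
| CONSTANT: "PRIMREC (\<lambda>l. k)"
| PROJ: "PRIMREC (\<lambda>l. nth0 l i)"
| COMP: "PRIMREC g \<Longrightarrow> (\<forall>f \<in> set fs. PRIMREC f) \<Longrightarrow> PRIMREC (\<lambda>l. g (map (\<lambda>f. f l) fs))"
| PREC: "PRIMREC f \<Longrightarrow> PRIMREC g \<Longrightarrow> PRIMREC (PREC f g)"

definition primrec_nat :: "(nat \<Rightarrow> nat) \<Rightarrow> bool" where
  "primrec_nat h \<longleftrightarrow> PRIMREC (\<lambda>l. h (hd0 l))"

definition primrec_int :: "(nat \<Rightarrow> int) \<Rightarrow> bool" where
  "primrec_int h \<longleftrightarrow> primrec_nat (\<lambda>n. int_encode (h n))"

text \<open>Functions on positive integers (represented as nat \<Rightarrow> int, only arguments \<ge> 1 matter)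
  are primitive recursive iff the shifted function n \<mapsto> P (n+1) is.\<close>
definition primrec_pos_int :: "(nat \<Rightarrow> int) \<Rightarrow> bool" where
  "primrec_pos_int P \<longleftrightarrow> primrec_int (\<lambda>n. P (Suc n))"

definition sprcn_value :: "int \<Rightarrow> (nat \<Rightarrow> int) \<Rightarrow> real" where
  "sprcn_value I P = real_of_int I + (\<Sum>i. real_of_int (P (Suc i)) / 2 ^ Suc i)"

end

theory Submission
  imports Defs
begin

text \<open>Shift the rationals \<open>q\<^sub>n = A n / B n\<close> by a natural number \<open>M\<close> so that their
  numerators become nonnegative, and let \<open>D k\<close> be \<open>2\<^sup>k (q\<^sub>m + M)\<close> rounded to the nearest
  integer, taken at the index \<open>m = C (k + 3)\<close> where \<open>q\<^sub>m\<close> is within \<open>2\<^sup>-\<^sup>k\<^sup>-\<^sup>3\<close> of the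
  limit \<open>x\<close>. Then \<open>\<bar>D k - 2\<^sup>k (x + M)\<bar> \<le> 1/2 + 1/8\<close>, so the differences
  \<open>D (k + 1) - 2 D k\<close> are integers of absolute value below \<open>2\<close>, i.e. signed binary digits,
  and the partial sums of the digit series telescope to \<open>D k / 2\<^sup>k - M \<longrightarrow> x\<close>.\<close>

section \<open>Primitive recursive arithmetic\<close>

lemma nth0_simps [simp]:
  "nth0 [] i = 0" "nth0 (x # l) 0 = x" "nth0 (x # l) (Suc i) = nth0 l i"
  by (auto simp: nth0_def)

lemma PREC_eqI:
  assumes "f [] = h []" and "\<And>x t. rec_nat (f t) (\<lambda>y r. g (r # y # t)) x = h (x # t)"
  shows "PREC f g = h"
proof
  fix l show "PREC f g l = h l" using assms by (cases l) auto
qed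

lemma PRIMREC_comp1: "primrec_nat f \<Longrightarrow> PRIMREC G \<Longrightarrow> PRIMREC (\<lambda>l. f (G l))"
  unfolding primrec_nat_def using COMP[of "\<lambda>l. f (hd0 l)" "[G]"] by (simp add: hd0_def)

lemma PRIMREC_comp2:
  "PRIMREC (\<lambda>l. h (nth0 l 0) (nth0 l 1)) \<Longrightarrow> PRIMREC F \<Longrightarrow> PRIMREC G
   \<Longrightarrow> PRIMREC (\<lambda>l. h (F l) (G l))"
  using COMP[of "\<lambda>l. h (nth0 l 0) (nth0 l 1)" "[F, G]"] by (simp add: numeral_2_eq_2)

lemma PRIMREC_add: "PRIMREC (\<lambda>l. nth0 l 0 + nth0 l 1)"
proof -
  have "PREC (\<lambda>l. nth0 l 0) (\<lambda>l. Suc (hd0 l)) = (\<lambda>l. nth0 l 0 + nth0 l 1)"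
  proof (rule PREC_eqI)
    show "rec_nat (nth0 t 0) (\<lambda>y r. Suc (hd0 (r # y # t))) x = nth0 (x # t) 0 + nth0 (x # t) 1"
      for x t by (induct x) (auto simp: hd0_def)
  qed simp
  moreover have "PRIMREC (PREC (\<lambda>l. nth0 l 0) (\<lambda>l. Suc (hd0 l)))"
    by (intro PRIMREC.PREC PROJ SC)
  ultimately show ?thesis by simp
qed

lemma PRIMREC_mult: "PRIMREC (\<lambda>l. nth0 l 0 * nth0 l 1)"
proof -
  have "PREC (\<lambda>l. 0) (\<lambda>l. nth0 l 0 + nth0 l 2) = (\<lambda>l. nth0 l 0 * nth0 l 1)"
  proof (rule PREC_eqI)
    show "rec_nat 0 (\<lambda>y r. nth0 (r # y # t) 0 + nth0 (r # y # t) 2) x = nth0 (x # t) 0 * nth0 (x # t) 1"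
      for x t by (induct x) (auto simp: numeral_2_eq_2)
  qed simp
  moreover have "PRIMREC (PREC (\<lambda>l. 0) (\<lambda>l. nth0 l 0 + nth0 l 2))"
    by (intro PRIMREC.PREC CONSTANT PRIMREC_comp2[OF PRIMREC_add] PROJ)
  ultimately show ?thesis by simp
qed

lemma PRIMREC_pred: "PRIMREC (\<lambda>l. nth0 l 0 - 1)"
proof -
  have "PREC (\<lambda>l. 0) (\<lambda>l. nth0 l 1) = (\<lambda>l. nth0 l 0 - 1)"
  proof (rule PREC_eqI)
    show "rec_nat 0 (\<lambda>y r. nth0 (r # y # t) 1) x = nth0 (x # t) 0 - 1" for x t
      by (cases x) auto
  qed simp
  moreover have "PRIMREC (PREC (\<lambda>l. 0) (\<lambda>l. nth0 l 1))"
    by (intro PRIMREC.PREC CONSTANT PROJ)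
  ultimately show ?thesis by simp
qed

lemma PRIMREC_diff: "PRIMREC (\<lambda>l. nth0 l 0 - nth0 l 1)"
proof -
  have "PREC (\<lambda>l. nth0 l 0) (\<lambda>l. nth0 l 0 - 1) = (\<lambda>l. nth0 l 1 - nth0 l 0)"
  proof (rule PREC_eqI)
    show "rec_nat (nth0 t 0) (\<lambda>y r. nth0 (r # y # t) 0 - 1) x = nth0 (x # t) 1 - nth0 (x # t) 0"
      for x t by (induct x) auto
  qed simp
  moreover have "PRIMREC (PREC (\<lambda>l. nth0 l 0) (\<lambda>l. nth0 l 0 - 1))"
    by (intro PRIMREC.PREC PRIMREC_pred PROJ)
  ultimately have "PRIMREC (\<lambda>l. nth0 l 1 - nth0 l 0)" by simp
  then have "PRIMREC (\<lambda>l. (\<lambda>a b. b - a) (nth0 l 1) (nth0 l 0))"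
    by (rule PRIMREC_comp2[where h="\<lambda>a b. b - a", OF _ PROJ PROJ])
  then show ?thesis by simp
qed

lemma PRIMREC_power2: "PRIMREC (\<lambda>l. 2 ^ nth0 l 0)"
proof -
  have "PREC (\<lambda>l. 1) (\<lambda>l. nth0 l 0 + nth0 l 0) = (\<lambda>l. 2 ^ nth0 l 0)"
  proof (rule PREC_eqI)
    show "rec_nat 1 (\<lambda>y r. nth0 (r # y # t) 0 + nth0 (r # y # t) 0) x = 2 ^ nth0 (x # t) 0"
      for x t by (induct x) auto
  qed simp
  moreover have "PRIMREC (PREC (\<lambda>l. 1) (\<lambda>l. nth0 l 0 + nth0 l 0))"
    by (intro PRIMREC.PREC CONSTANT PRIMREC_comp2[OF PRIMREC_add] PROJ)
  ultimately show ?thesis by simp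
qed

text \<open>The factor \<open>1 - (1 - m)\<close> is the sign of \<open>m\<close>; it makes the identity hold for
  \<open>m = 0\<close> as well.\<close>

lemma div_eq_bounded_count: "n div m = (1 - (1 - m)) * (\<Sum>k<n. 1 - (Suc k * m - n))"
proof (cases "m = 0")
  case False
  then have m: "0 < m" by simp
  have "(\<Sum>k<n. 1 - (Suc k * m - n)) = (\<Sum>k<n. if k < n div m then 1 else 0)"
  proof (rule sum.cong)
    fix k
    have "Suc k * m \<le> n \<longleftrightarrow> k < n div m"
      using less_eq_div_iff_mult_less_eq[OF m, of "Suc k" n] by (simp only: Suc_le_eq)
    then show "1 - (Suc k * m - n) = (if k < n div m then 1 else 0)" by (auto simp del: mult_Suc)
  qed simp
  also have "\<dots> = card ({..<n} \<inter> {k. k < n div m})"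
    by (simp add: sum.If_cases)
  also have "{..<n} \<inter> {k. k < n div m} = {..<n div m}"
    using div_le_dividend[of n m] by (auto intro: less_le_trans)
  finally show ?thesis using m by simp
qed simp

lemma PRIMREC_div: "PRIMREC (\<lambda>l. nth0 l 0 div nth0 l 1)"
proof -
  define g where "g = (\<lambda>l. nth0 l 0 + (1 - (Suc (nth0 l 1) * nth0 l 3 - nth0 l 2)))"
  have "PRIMREC g" unfolding g_def
    by (intro PRIMREC_comp2[OF PRIMREC_add] PRIMREC_comp2[OF PRIMREC_diff]
        PRIMREC_comp2[OF PRIMREC_mult] PROJ CONSTANT PRIMREC_comp1[OF SC[folded primrec_nat_def]])
  have count: "PREC (\<lambda>l. 0) g (j # t) = (\<Sum>k<j. 1 - (Suc k * nth0 t 1 - nth0 t 0))" for j t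
    by (induct j) (auto simp: g_def numeral_3_eq_3 numeral_2_eq_2)
  have "PRIMREC (\<lambda>l. PREC (\<lambda>l. 0) g (map (\<lambda>f. f l) [\<lambda>l. nth0 l 0, \<lambda>l. nth0 l 0, \<lambda>l. nth0 l 1]))"
    by (rule COMP) (auto intro: PRIMREC.PREC CONSTANT \<open>PRIMREC g\<close> PROJ)
  moreover have "PREC (\<lambda>l. 0) g [nth0 l 0, nth0 l 0, nth0 l 1]
      = (\<Sum>k<nth0 l 0. 1 - (Suc k * nth0 l 1 - nth0 l 0))" for l
    unfolding count by (simp add: nth0_def)
  ultimately have "PRIMREC (\<lambda>l. (\<Sum>k<nth0 l 0. 1 - (Suc k * nth0 l 1 - nth0 l 0)))"
    by (simp only: list.map)
  moreover have "PRIMREC (\<lambda>l. 1 - (1 - nth0 l 1))"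
    by (intro PRIMREC_comp2[OF PRIMREC_diff] CONSTANT PROJ)
  ultimately show ?thesis
    by (subst div_eq_bounded_count) (rule PRIMREC_comp2[OF PRIMREC_mult])
qed

lemma primrec_nat_id: "primrec_nat (\<lambda>n. n)"
  unfolding primrec_nat_def hd0_def by (rule PROJ)

lemma primrec_nat_const: "primrec_nat (\<lambda>n. c)"
  unfolding primrec_nat_def by (rule CONSTANT)

lemma primrec_nat_comp: "primrec_nat f \<Longrightarrow> primrec_nat g \<Longrightarrow> primrec_nat (\<lambda>n. f (g n))"
  unfolding primrec_nat_def by (rule PRIMREC_comp1[unfolded primrec_nat_def])

lemma primrec_nat_binop:
  "PRIMREC (\<lambda>l. h (nth0 l 0) (nth0 l 1)) \<Longrightarrow> primrec_nat f \<Longrightarrow> primrec_nat g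
   \<Longrightarrow> primrec_nat (\<lambda>n. h (f n) (g n))"
  unfolding primrec_nat_def by (rule PRIMREC_comp2)

lemma primrec_nat_add: "primrec_nat f \<Longrightarrow> primrec_nat g \<Longrightarrow> primrec_nat (\<lambda>n. f n + g n)"
  by (rule primrec_nat_binop[OF PRIMREC_add])

lemma primrec_nat_mult: "primrec_nat f \<Longrightarrow> primrec_nat g \<Longrightarrow> primrec_nat (\<lambda>n. f n * g n)"
  by (rule primrec_nat_binop[OF PRIMREC_mult])

lemma primrec_nat_diff: "primrec_nat f \<Longrightarrow> primrec_nat g \<Longrightarrow> primrec_nat (\<lambda>n. f n - g n)"
  by (rule primrec_nat_binop[OF PRIMREC_diff])

lemma primrec_nat_div: "primrec_nat f \<Longrightarrow> primrec_nat g \<Longrightarrow> primrec_nat (\<lambda>n. f n div g n)"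
  by (rule primrec_nat_binop[OF PRIMREC_div])

lemma primrec_nat_mod: "primrec_nat f \<Longrightarrow> primrec_nat g \<Longrightarrow> primrec_nat (\<lambda>n. f n mod g n)"
  unfolding minus_div_mult_eq_mod[symmetric]
  by (intro primrec_nat_diff primrec_nat_mult primrec_nat_div)

lemma primrec_nat_power2: "primrec_nat f \<Longrightarrow> primrec_nat (\<lambda>n. 2 ^ f n)"
  using primrec_nat_comp[of "\<lambda>n. 2 ^ n" f] PRIMREC_power2
  unfolding primrec_nat_def hd0_def by simp

lemma primrec_nat_Suc: "primrec_nat f \<Longrightarrow> primrec_nat (\<lambda>n. Suc (f n))"
  using primrec_nat_comp[of Suc f] SC unfolding primrec_nat_def by simp

lemmas primrec_nat_intros = primrec_nat_id primrec_nat_const primrec_nat_add primrec_nat_mult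
  primrec_nat_diff primrec_nat_div primrec_nat_mod primrec_nat_power2 primrec_nat_Suc

lemma primrec_int_comp: "primrec_int f \<Longrightarrow> primrec_nat g \<Longrightarrow> primrec_int (\<lambda>n. f (g n))"
  unfolding primrec_int_def by (rule primrec_nat_comp)

text \<open>\<open>int_encode i\<close> is \<open>2 i\<close> for \<open>i \<ge> 0\<close> and \<open>-2 i - 1\<close> for \<open>i < 0\<close>.\<close>

lemma int_encode_diff: "int_encode (int a - int b) = 2 * (a - b) + (2 * (b - a) - 1)"
  by (cases "a \<le> b") (auto simp: int_encode_def sum_encode_def nat_diff_distrib)

lemma primrec_int_diff:
  "primrec_nat f \<Longrightarrow> primrec_nat g \<Longrightarrow> primrec_int (\<lambda>n. int (f n) - int (g n))"
  unfolding primrec_int_def int_encode_diff by (intro primrec_nat_intros)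

lemma nat_add_eq_int_encode:
  assumes "0 \<le> i + int g"
  shows "nat (i + int g) = (g + int_encode i div 2) - int_encode i mod 2 * int_encode i"
  using assms by (auto simp: int_encode_def sum_encode_def)

lemma primrec_nat_nat_add:
  assumes "primrec_int f" and "primrec_nat g" and "\<And>n. 0 \<le> f n + int (g n)"
  shows "primrec_nat (\<lambda>n. nat (f n + int (g n)))"
proof -
  have "primrec_nat (\<lambda>n. int_encode (f n))" using assms(1) unfolding primrec_int_def .
  then show ?thesis
    unfolding nat_add_eq_int_encode[OF assms(3)] by (intro primrec_nat_intros assms(2))
qed

lemma primrec_nat_nat:
  assumes "primrec_int f" and "\<And>n. 0 \<le> f n"
  shows "primrec_nat (\<lambda>n. nat (f n))"
  using primrec_nat_nat_add[OF assms(1) primrec_nat_const, of 0] assms(2) by simp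

section \<open>Dyadic approximation of the limit\<close>

lemma Cauchy_modulus_limit:
  fixes q :: "nat \<Rightarrow> real"
  assumes modulus: "\<And>e i j. C e \<le> i \<Longrightarrow> C e \<le> j \<Longrightarrow> \<bar>q i - q j\<bar> < 1 / 2 ^ e"
  obtains x where "q \<longlonglongrightarrow> x" and "\<And>e i. C e \<le> i \<Longrightarrow> \<bar>q i - x\<bar> \<le> 1 / 2 ^ e"
proof -
  have "Cauchy q"
  proof (rule metric_CauchyI)
    fix r :: real assume "0 < r"
    then obtain e where e: "(1/2) ^ e < r" using real_arch_pow_inv[of r "1/2"] by auto
    have "dist (q i) (q j) < r" if "C e \<le> i" "C e \<le> j" for i j
      using modulus[OF that] e by (simp add: dist_real_def power_one_over)
    then show "\<exists>M. \<forall>i\<ge>M. \<forall>j\<ge>M. dist (q i) (q j) < r" by blast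
  qed
  then obtain x where lim: "q \<longlonglongrightarrow> x" using Cauchy_convergent_iff convergent_def by blast
  have "\<bar>q i - x\<bar> \<le> 1 / 2 ^ e" if "C e \<le> i" for e i
  proof (rule LIMSEQ_le_const2)
    show "(\<lambda>j. \<bar>q i - q j\<bar>) \<longlonglongrightarrow> \<bar>q i - x\<bar>" by (intro tendsto_intros lim)
    show "\<exists>N. \<forall>j\<ge>N. \<bar>q i - q j\<bar> \<le> 1 / 2 ^ e"
      using modulus[OF that] by (intro exI[of _ "C e"]) (auto intro: less_imp_le)
  qed
  with lim show thesis by (rule that)
qed

lemma shifted_numerator_nonneg:
  fixes a b :: int and x :: real
  assumes "0 < b" and "\<bar>a / b - x\<bar> \<le> 1" and "\<bar>x\<bar> + 1 \<le> real M"
  shows "0 \<le> a + int M * b"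
proof -
  have "- real M \<le> a / b" using assms(2,3) by linarith
  then have "real_of_int (- (int M * b)) \<le> real_of_int a"
    using assms(1) by (simp add: pos_le_divide_eq)
  then show ?thesis unfolding of_int_le_iff by linarith
qed

lemma round_div_approx:
  fixes a b :: nat
  assumes "0 < b"
  shows "\<bar>real ((2 * a + b) div (2 * b)) - real a / real b\<bar> \<le> 1/2"
proof -
  define d where "d = (2 * a + b) div (2 * b)"
  have "d * (2 * b) \<le> 2 * a + b" and "2 * a + b < 2 * b + d * (2 * b)"
    unfolding d_def using assms by (simp_all add: dividend_less_div_times)
  then have "real (d * (2 * b)) \<le> real (2 * a + b)"
    and "real (2 * a + b) < real (2 * b + d * (2 * b))"
    by (simp_all only: of_nat_le_iff of_nat_less_iff)
  then show ?thesis
    unfolding d_def[symmetric] abs_le_iff using assms by (simp add: field_simps)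
qed

lemma primrec_dyadic_approximation:
  fixes A B :: "nat \<Rightarrow> int" and C :: "nat \<Rightarrow> nat" and x :: real
  assumes "primrec_int A" and "primrec_int B" and B_pos: "\<And>n. 0 < B n" and "primrec_nat C"
    and close: "\<And>e i. C e \<le> i \<Longrightarrow> \<bar>A i / B i - x\<bar> \<le> 1 / 2 ^ e"
  obtains D :: "nat \<Rightarrow> nat" and M :: nat
  where "primrec_nat D" and "\<And>k. \<bar>real (D k) - 2 ^ k * (x + real M)\<bar> \<le> 5/8"
proof -
  define M where "M = nat \<lceil>\<bar>x\<bar>\<rceil> + 1"
  define m where "m k = C (k + 3)" for k
  define b where "b k = nat (B (m k))" for k
  define N where "N k = nat (A (m k) + int (M * b k))" for k
  define D where "D k = (2 * (2 ^ k * N k) + b k) div (2 * b k)" for k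
  have close_m: "\<bar>A (m k) / B (m k) - x\<bar> \<le> 1 / 2 ^ (k + 3)" for k
    unfolding m_def by (rule close) simp
  have B_nonneg: "0 \<le> B n" for n using B_pos[of n] by simp
  have b: "int (b k) = B (m k)" for k using B_pos[of "m k"] by (simp add: b_def)
  have N_nonneg: "0 \<le> A (m k) + int (M * b k)" for k
  proof -
    have "\<bar>A (m k) / B (m k) - x\<bar> \<le> 1"
      using close_m[of k] by (rule order_trans) simp
    moreover have "\<bar>x\<bar> + 1 \<le> real M" unfolding M_def by linarith
    ultimately show ?thesis using shifted_numerator_nonneg B_pos b by simp
  qed
  have "primrec_nat m" unfolding m_def by (intro primrec_nat_comp[OF \<open>primrec_nat C\<close>] primrec_nat_intros)
  have "primrec_nat b"
    unfolding b_def by (rule primrec_nat_nat[OF primrec_int_comp[OF \<open>primrec_int B\<close> \<open>primrec_nat m\<close>] B_nonneg])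
  have "primrec_nat N"
    unfolding N_def using N_nonneg
    by (intro primrec_nat_nat_add primrec_int_comp[OF \<open>primrec_int A\<close> \<open>primrec_nat m\<close>]
        primrec_nat_mult[OF primrec_nat_const \<open>primrec_nat b\<close>])
  have "primrec_nat D"
    unfolding D_def using \<open>primrec_nat N\<close> \<open>primrec_nat b\<close> by (intro primrec_nat_intros)
  moreover have "\<bar>real (D k) - 2 ^ k * (x + real M)\<bar> \<le> 5/8" for k
  proof -
    define q where "q = A (m k) / B (m k)"
    have "0 < b k" using B_pos[of "m k"] by (simp add: b_def)
    have "int (N k) = A (m k) + int M * B (m k)" using N_nonneg[of k] b[of k] by (simp add: N_def)
    then have "real (N k) = A (m k) + real M * B (m k)"
      by (metis of_int_add of_int_mult of_int_of_nat_eq)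
    moreover have "real (b k) = B (m k)" using b[of k] by (metis of_int_of_nat_eq)
    ultimately have scaled: "real (2 ^ k * N k) / real (b k) = 2 ^ k * q + 2 ^ k * real M"
      using \<open>0 < b k\<close> by (simp add: q_def field_simps)
    have rounding: "\<bar>real (D k) - real (2 ^ k * N k) / real (b k)\<bar> \<le> 1/2"
      unfolding D_def using \<open>0 < b k\<close> by (rule round_div_approx)
    have "2 ^ k * \<bar>q - x\<bar> \<le> 1/8"
      using mult_left_mono[OF close_m[of k], of "2 ^ k"] unfolding q_def by (simp add: power_add)
    then have "\<bar>2 ^ k * q - 2 ^ k * x\<bar> \<le> 1/8" by (simp add: abs_mult flip: right_diff_distrib)
    with scaled rounding show ?thesis unfolding abs_le_iff distrib_left by linarith
  qed
  ultimately show thesis by (rule that)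
qed

section \<open>Signed binary digits from dyadic approximations\<close>

lemma dyadic_approximation_digit:
  fixes d d' :: int and y c :: real
  assumes "\<bar>d - 2 ^ k * y\<bar> \<le> c" and "\<bar>d' - 2 ^ Suc k * y\<bar> \<le> c" and "3 * c < 2"
  shows "d' - 2 * d \<in> {-1, 0, 1}"
proof -
  have "2 ^ Suc k * y = 2 * (2 ^ k * y)" by simp
  then have "\<bar>real_of_int (d' - 2 * d)\<bar> < 2"
    using assms unfolding abs_le_iff abs_less_iff by auto
  then have "\<bar>d' - 2 * d\<bar> < 2" by linarith
  then show ?thesis by auto
qed

lemma sprcn_value_dyadic_approximations:
  fixes D :: "nat \<Rightarrow> int" and y c :: real
  assumes approx: "\<And>k. \<bar>D k - 2 ^ k * y\<bar> \<le> c"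
  shows "sprcn_value (D 0) (\<lambda>i. D i - 2 * D (i - 1)) = y"
proof -
  have partial_sum: "(\<Sum>i<n. real_of_int (D (Suc i) - 2 * D i) / 2 ^ Suc i) = D n / 2 ^ n - D 0" for n
    by (induct n) (simp_all add: field_simps)
  have "(\<lambda>n. D n / 2 ^ n - y) \<longlonglongrightarrow> 0"
  proof (rule tendsto_0_le)
    show "(\<lambda>n. (1/2::real) ^ n) \<longlonglongrightarrow> 0" by (rule LIMSEQ_power_zero) simp
    have "D n / 2 ^ n - y = (1/2) ^ n * (D n - 2 ^ n * y)" for n
      by (simp add: field_simps)
    then have "norm (D n / 2 ^ n - y) \<le> norm ((1/2::real) ^ n) * c" for n
      using approx[of n] by (simp add: abs_mult mult_left_mono)
    then show "\<forall>\<^sub>F n in sequentially. norm (D n / 2 ^ n - y) \<le> norm ((1/2::real) ^ n) * c"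
      by simp
  qed
  then have "(\<lambda>n. D n / 2 ^ n - D 0) \<longlonglongrightarrow> y - D 0"
    unfolding LIM_zero_iff by (intro tendsto_intros)
  then have "(\<lambda>n. \<Sum>i<n. real_of_int (D (Suc i) - 2 * D i) / 2 ^ Suc i) \<longlonglongrightarrow> y - D 0"
    unfolding partial_sum .
  then show ?thesis
    unfolding sprcn_value_def by (simp add: sums_def sums_unique[symmetric])
qed

theorem theorem1:
  fixes A :: "nat \<Rightarrow> int" and B :: "nat \<Rightarrow> int" and C :: "nat \<Rightarrow> nat"
  assumes "primrec_int A" and "primrec_int B" and "\<And>n. B n > 0"
    and "primrec_nat C"
    and "\<And>e i j. i \<ge> C e \<Longrightarrow> j \<ge> C e \<Longrightarrow>
           \<bar>real_of_int (A i) / real_of_int (B i) - real_of_int (A j) / real_of_int (B j)\<bar> < 1 / 2 ^ e"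
  shows "\<exists>(I::int) (P::nat \<Rightarrow> int). primrec_pos_int P \<and> (\<forall>i\<ge>1. P i \<in> {-1, 0, 1}) \<and>
           (\<lambda>n. real_of_int (A n) / real_of_int (B n)) \<longlonglongrightarrow> sprcn_value I P"
proof -
  obtain x where lim: "(\<lambda>n. real_of_int (A n) / real_of_int (B n)) \<longlonglongrightarrow> x"
    and close: "\<And>e i. C e \<le> i \<Longrightarrow> \<bar>A i / B i - x\<bar> \<le> 1 / 2 ^ e"
    using Cauchy_modulus_limit[of C "\<lambda>n. A n / B n"] assms(5) by blast
  obtain D M where "primrec_nat D" and approx: "\<And>k. \<bar>real (D k) - 2 ^ k * (x + real M)\<bar> \<le> 5/8"
    using primrec_dyadic_approximation[OF assms(1-4) close] by blast
  define P where "P i = int (D i) - 2 * int (D (i - 1))" for i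
  have "primrec_pos_int P"
    using primrec_int_diff[OF primrec_nat_comp[OF \<open>primrec_nat D\<close> primrec_nat_Suc[OF primrec_nat_id]]
        primrec_nat_mult[OF primrec_nat_const \<open>primrec_nat D\<close>], of 2]
    by (simp add: primrec_pos_int_def P_def)
  moreover have "P i \<in> {-1, 0, 1}" if i: "1 \<le> i" for i
  proof -
    obtain k where "i = Suc k" using i by (cases i) auto
    have "int (D (Suc k)) - 2 * int (D k) \<in> {-1, 0, 1}"
      by (rule dyadic_approximation_digit[where c = "5/8" and y = "x + M" and k = k])
        (use approx[of k] approx[of "Suc k"] in simp_all)
    then show ?thesis by (simp add: P_def \<open>i = Suc k\<close>)
  qed
  moreover have "sprcn_value (int (D 0) - int M) P = x"
    using sprcn_value_dyadic_approximations[of "\<lambda>k. int (D k)" "x + M" "5/8"] approx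
    by (simp add: sprcn_value_def P_def)
  ultimately show ?thesis using lim by blast
qed

end
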